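(* Let $K=\mathbb{Z}/3$, let $G$ be a simple graph with edges $e_1,\dots,e_s$ ($s\ge1$), and let $X$, $C_X(d)$ be as in the context. For each integer $d$, let $\mathcal{B}_d$ be the set of monomials of $S$ of degree $d$ not divisible by the leading term (for the graded reverse lexicographic order with $t_1>\dots>t_s$) of any polynomial in the ideal $(I(X),t_s^2)$, with $\mathcal{B}_d=\emptyset$ for $d<0$, and let $\beta(d)=|\mathcal{B}_d|$. Then for every $d\ge0$, $$\dim_K C_X(d)=\sum_{i\ge0}\beta(d-2i).$$
   Context: Let $G$ be a simple graph with vertex set $\{1,\dots,n\}$ and a fixed ordering $e_1,\dots,e_s$ of its edges; edge $e_k$ is identified with the variable $t_k$ of $S=K[t_1,\dots,t_s]$, $K$ a finite field. Let $X\subseteq\mathbb{P}^{s-1}$ be the image of the projective torus $\{(x_1:\dots:x_n): x_i\neq0\}\subseteq\mathbb{P}^{n-1}$ under the map whose $k$-th coordinate is $x_ix_j$ when $e_k=\{i,j\}$. Order $X=\{P_1,\dots,P_m\}$. For $d\ge0$ the parameterized code of order $d$, $C_X(d)\subseteq K^m$, is the image of the space $S_d$ of homogeneous polynomials of degree $d$ under $f\mapsto \big(f(P_1)/f_0(P_1),\dots,f(P_m)/f_0(P_m)\big)$ with $f_0=t_1^d$. $I(X)\subseteq S$ is the ideal generated by homogeneous polynomials vanishing on $X$. *)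

theory Defs
  imports Main "HOL.Vector_Spaces" "HOL-Library.Poly_Mapping" "HOL-Library.Function_Algebras"
begin

text \<open>Multivariate polynomials over a field 'a in variables indexed by nat:
  elements of (nat =>0 nat) =>0 'a (monomials are exponent vectors).
  Variable t_(k+1) of the paper is index k here (k < s).\<close>

type_synonym monom = "nat \<Rightarrow>\<^sub>0 nat"
type_synonym 'a mpoly = "monom \<Rightarrow>\<^sub>0 'a"

definition mdeg :: "monom \<Rightarrow> nat" where
  "mdeg m = (\<Sum>i\<in>Poly_Mapping.keys m. Poly_Mapping.lookup m i)"

definition mdvd :: "monom \<Rightarrow> monom \<Rightarrow> bool" where
  "mdvd a b \<longleftrightarrow> (\<forall>i. Poly_Mapping.lookup a i \<le> Poly_Mapping.lookup b i)"

definition Sring :: "nat \<Rightarrow> ('a::zero) mpoly set" where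
  "Sring s = {f. \<forall>m\<in>Poly_Mapping.keys f. Poly_Mapping.keys m \<subseteq> {..<s}}"

definition Shom :: "nat \<Rightarrow> nat \<Rightarrow> ('a::zero) mpoly set" where
  "Shom s d = {f \<in> Sring s. \<forall>m\<in>Poly_Mapping.keys f. mdeg m = d}"

definition mpeval :: "('a::comm_ring_1) mpoly \<Rightarrow> (nat \<Rightarrow> 'a) \<Rightarrow> 'a" where
  "mpeval f v = (\<Sum>m\<in>Poly_Mapping.keys f. Poly_Mapping.lookup f m * (\<Prod>i\<in>Poly_Mapping.keys m. v i ^ Poly_Mapping.lookup m i))"

definition ideal_gen :: "nat \<Rightarrow> ('a::comm_ring_1) mpoly set \<Rightarrow> 'a mpoly set" where
  "ideal_gen s A = {f. \<exists>F c. finite F \<and> F \<subseteq> A \<and> (\<forall>g\<in>F. c g \<in> Sring s)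
                              \<and> f = (\<Sum>g\<in>F. c g * g)}"

text \<open>Graded reverse lexicographic order with t_1 > ... > t_s (index 0 largest):
  a < b iff deg a < deg b, or degrees equal and the last variable in which they
  differ has larger exponent in a.\<close>
definition grevlex_less :: "monom \<Rightarrow> monom \<Rightarrow> bool" where
  "grevlex_less a b \<longleftrightarrow> mdeg a < mdeg b \<or>
     (mdeg a = mdeg b \<and> (\<exists>i. Poly_Mapping.lookup b i < Poly_Mapping.lookup a i \<and> (\<forall>j>i. Poly_Mapping.lookup a j = Poly_Mapping.lookup b j)))"

definition lead_monom :: "('a::zero) mpoly \<Rightarrow> monom" where
  "lead_monom f = (THE m. m \<in> Poly_Mapping.keys f \<and> (\<forall>m'\<in>Poly_Mapping.keys f. m' \<noteq> m \<longrightarrow> grevlex_less m' m))"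

text \<open>Projective point of P^(s-1) represented by a nonzero vector v: its class of nonzero multiples.\<close>
definition proj_pt :: "(nat \<Rightarrow> 'a::field) \<Rightarrow> (nat \<Rightarrow> 'a) set" where
  "proj_pt v = {(\<lambda>k. c * v k) | c. c \<noteq> 0}"

text \<open>A graph on vertices {1..n} given by its ordered list of edges es (edge e_(k+1) = es ! k).\<close>
definition simple_graph :: "nat \<Rightarrow> nat set list \<Rightarrow> bool" where
  "simple_graph n es \<longleftrightarrow> distinct es \<and> (\<forall>e\<in>set es. card e = 2 \<and> e \<subseteq> {1..n})"

definition edge_map :: "nat set list \<Rightarrow> (nat \<Rightarrow> 'a::field) \<Rightarrow> nat \<Rightarrow> 'a" where
  "edge_map es x = (\<lambda>k. if k < length es then (\<Prod>i\<in>es ! k. x i) else 0)"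

definition torus_X :: "nat \<Rightarrow> nat set list \<Rightarrow> (nat \<Rightarrow> 'a::field) set set" where
  "torus_X n es = {proj_pt (edge_map es x) | x. \<forall>i\<in>{1..n}. x i \<noteq> 0}"

definition rep :: "(nat \<Rightarrow> 'a) set \<Rightarrow> nat \<Rightarrow> 'a" where
  "rep P = (SOME v. v \<in> P)"

text \<open>Parameterized code C_X(d) as a subspace of K^X (functions X -> K, zero off X),
  f |-> (f(P)/t_1^d(P))_P.\<close>
definition param_code :: "nat \<Rightarrow> nat set list \<Rightarrow> nat \<Rightarrow> ((nat \<Rightarrow> 'a::field) set \<Rightarrow> 'a) set" where
  "param_code n es d = {(\<lambda>P. if P \<in> torus_X n es then mpeval f (rep P) / (rep P 0) ^ d else 0)
                        | f. f \<in> Shom (length es) d}"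

definition vanishing_ideal :: "nat \<Rightarrow> nat set list \<Rightarrow> ('a::field) mpoly set" where
  "vanishing_ideal n es = ideal_gen (length es)
     {f. \<exists>d. f \<in> Shom (length es) d \<and> (\<forall>P\<in>torus_X n es. \<forall>v\<in>P. mpeval f v = 0)}"

definition IXts2 :: "nat \<Rightarrow> nat set list \<Rightarrow> ('a::field) mpoly set" where
  "IXts2 n es = ideal_gen (length es)
     (vanishing_ideal n es \<union> {Poly_Mapping.single (Poly_Mapping.single (length es - 1) 2) 1})"

definition std_monoms :: "nat \<Rightarrow> nat set list \<Rightarrow> nat \<Rightarrow> ('a::field) itself \<Rightarrow> monom set" where
  "std_monoms n es d _ = {m. Poly_Mapping.keys m \<subseteq> {..<length es} \<and> mdeg m = d \<and>
      (\<forall>f\<in>(IXts2 n es :: 'a mpoly set). f \<noteq> 0 \<longrightarrow> \<not> mdvd (lead_monom f) m)}"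

definition beta :: "nat \<Rightarrow> nat set list \<Rightarrow> ('a::field) itself \<Rightarrow> nat \<Rightarrow> nat" where
  "beta n es T d = card (std_monoms n es d T)"

definition fdim :: "('b \<Rightarrow> 'a::field) set \<Rightarrow> nat" where
  "fdim C = vector_space.dim (\<lambda>c f x. c * f x) C"

end

theory Submission
  imports Defs "HOL-Library.FuncSet"
begin

text \<open>Evaluation at the points of X maps S_d onto C_X(d) with kernel I(X)_d. Dividing by I(X)_d
  (with respect to grevlex) shows that the degree-d monomials that are not leading monomials of
  I(X)_d index a basis of C_X(d), so its dimension is the Hilbert function H(d) of S/I(X).

  The variable t_s vanishes nowhere on X, so t_s^2 is a non-zero-divisor modulo I(X). As t_s is the
  smallest variable for grevlex, a homogeneous polynomial whose leading monomial is divisible by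
  t_s^2 is itself divisible by t_s^2. Hence the standard monomials of degree d+2 divisible by t_s^2
  are exactly t_s^2 times those of degree d, while the remaining ones are the standard monomials
  of (I(X), t_s^2); the latter holds because (I(X), t_s^2) is generated by homogeneous polynomials.
  So H(d+2) = beta(d+2) + H(d), and the formula follows by induction on d. The argument works over
  any field.\<close>

abbreviation lookup :: "('a \<Rightarrow>\<^sub>0 'b::zero) \<Rightarrow> 'a \<Rightarrow> 'b" where
  "lookup \<equiv> Poly_Mapping.lookup"

abbreviation keys :: "('a \<Rightarrow>\<^sub>0 'b::zero) \<Rightarrow> 'a set" where
  "keys \<equiv> Poly_Mapping.keys"

section \<open>Monomials and the grevlex order\<close>

lemma mdeg_eq_sum:
  assumes "finite A" "keys m \<subseteq> A"
  shows "mdeg m = (\<Sum>i\<in>A. lookup m i)"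
  unfolding mdeg_def using assms
  by (intro sum.mono_neutral_left) (auto simp: in_keys_iff)

lemma keys_add_monom: "keys (a + b :: monom) = keys a \<union> keys b"
  by (auto simp: in_keys_iff lookup_add)

lemma mdeg_add: "mdeg (a + b) = mdeg a + mdeg b"
proof -
  have "mdeg (a + b) = (\<Sum>i\<in>keys a \<union> keys b. lookup (a + b) i)"
    by (rule mdeg_eq_sum) (auto simp: keys_add_monom)
  also have "\<dots> = (\<Sum>i\<in>keys a \<union> keys b. lookup a i) + (\<Sum>i\<in>keys a \<union> keys b. lookup b i)"
    by (simp add: lookup_add sum.distrib)
  also have "\<dots> = mdeg a + mdeg b"
    by (simp add: mdeg_eq_sum[symmetric])
  finally show ?thesis .
qed

lemma lookup_le_mdeg: "lookup m i \<le> mdeg m"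
  unfolding mdeg_def by (cases "i \<in> keys m") (auto simp: in_keys_iff intro: member_le_sum)

lemma mdvd_refl: "mdvd m m"
  unfolding mdvd_def by simp

lemma mdvd_add_right: "mdvd u (u + k)"
  unfolding mdvd_def by (simp add: lookup_add)

lemma add_diff_monom: "mdvd u x \<Longrightarrow> u + (x - u) = (x::monom)"
  unfolding mdvd_def by (intro poly_mapping_eqI) (simp add: lookup_add lookup_minus)

lemma keys_diff_monom_subset: "keys (a - b) \<subseteq> keys (a::monom)"
  by (auto simp: in_keys_iff lookup_minus)

definition monoms_deg :: "nat \<Rightarrow> nat \<Rightarrow> monom set" where
  "monoms_deg s d = {m. keys m \<subseteq> {..<s} \<and> mdeg m = d}"

lemma finite_monoms_deg: "finite (monoms_deg s d)"
proof -
  have "inj_on (\<lambda>m. restrict (lookup m) {..<s}) (monoms_deg s d)"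
  proof (rule inj_onI, rule poly_mapping_eqI)
    fix a b i assume ab: "a \<in> monoms_deg s d" "b \<in> monoms_deg s d"
      and eq: "restrict (lookup a) {..<s} = restrict (lookup b) {..<s}"
    show "lookup a i = lookup b i"
    proof (cases "i < s")
      case True
      then show ?thesis
        using fun_cong[OF eq, of i] by simp
    next
      case False
      then have "i \<notin> keys a" "i \<notin> keys b"
        using ab by (auto simp: monoms_deg_def)
      then show ?thesis
        by (simp add: in_keys_iff)
    qed
  qed
  moreover have "(\<lambda>m. restrict (lookup m) {..<s}) ` monoms_deg s d \<subseteq> PiE {..<s} (\<lambda>_. {..d})"
  proof (rule image_subsetI)
    fix m assume "m \<in> monoms_deg s d"
    then show "restrict (lookup m) {..<s} \<in> PiE {..<s} (\<lambda>_. {..d})"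
      using lookup_le_mdeg[of m] by (simp add: monoms_deg_def restrict_PiE_iff)
  qed
  moreover have "finite (PiE {..<s} (\<lambda>_. {..d::nat}))"
    by (intro finite_PiE) auto
  ultimately show ?thesis
    using finite_imageD finite_subset by metis
qed

lemma grevlex_less_irrefl: "\<not> grevlex_less a a"
  unfolding grevlex_less_def by auto

lemma grevlex_less_asym:
  assumes "grevlex_less a b"
  shows "\<not> grevlex_less b a"
proof
  assume ba: "grevlex_less b a"
  then have "mdeg a = mdeg b"
    using assms unfolding grevlex_less_def by auto
  then obtain i j where i: "lookup b i < lookup a i" "\<forall>k>i. lookup a k = lookup b k"
    and j: "lookup a j < lookup b j" "\<forall>k>j. lookup b k = lookup a k"
    using assms ba unfolding grevlex_less_def by auto
  then show False
    by (cases i j rule: linorder_cases) fastforce+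
qed

lemma grevlex_less_trans:
  assumes ab: "grevlex_less a b" and bc: "grevlex_less b c"
  shows "grevlex_less a c"
proof (cases "mdeg a = mdeg b \<and> mdeg b = mdeg c")
  case True
  obtain i where i: "lookup b i < lookup a i" "\<forall>k>i. lookup a k = lookup b k"
    using ab True unfolding grevlex_less_def by auto
  obtain j where j: "lookup c j < lookup b j" "\<forall>k>j. lookup b k = lookup c k"
    using bc True unfolding grevlex_less_def by auto
  have "\<exists>k. lookup c k < lookup a k \<and> (\<forall>l>k. lookup a l = lookup c l)"
  proof (cases "i \<le> j")
    case True
    then show ?thesis
      using i j by (intro exI[of _ j]) (auto simp: order.order_iff_strict)
  next
    case False
    then show ?thesis
      using i j by (intro exI[of _ i]) auto
  qed
  then show ?thesis
    using True unfolding grevlex_less_def by auto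
next
  case False
  then show ?thesis
    using ab bc unfolding grevlex_less_def by auto
qed

lemma grevlex_less_total:
  assumes "a \<noteq> b"
  shows "grevlex_less a b \<or> grevlex_less b a"
proof (cases "mdeg a = mdeg b")
  case True
  let ?D = "{i. lookup a i \<noteq> lookup b i}"
  define i where "i = Max ?D"
  have fin: "finite ?D"
    by (rule finite_subset[of _ "keys a \<union> keys b"]) (auto simp: in_keys_iff)
  have "?D \<noteq> {}"
  proof
    assume "?D = {}"
    then have "a = b"
      by (intro poly_mapping_eqI) auto
    with assms show False ..
  qed
  then have "lookup a i \<noteq> lookup b i"
    using Max_in[OF fin] unfolding i_def by blast
  moreover have above: "\<forall>j>i. lookup a j = lookup b j"
    using Max_ge[OF fin] unfolding i_def by force
  ultimately consider "lookup a i < lookup b i" | "lookup b i < lookup a i"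
    by linarith
  then show ?thesis
  proof cases
    case 1
    then have "grevlex_less b a"
      using True above unfolding grevlex_less_def by (intro disjI2 conjI exI[of _ i]) auto
    then show ?thesis ..
  next
    case 2
    then have "grevlex_less a b"
      using True above unfolding grevlex_less_def by (intro disjI2 conjI exI[of _ i]) auto
    then show ?thesis ..
  qed
qed (auto simp: grevlex_less_def)

lemma grevlex_less_add_left: "grevlex_less (u + a) (u + b) \<longleftrightarrow> grevlex_less a b"
  unfolding grevlex_less_def by (simp add: mdeg_add lookup_add)

lemma ex_grevlex_greatest:
  assumes "finite A" "A \<noteq> {}"
  shows "\<exists>m\<in>A. \<forall>m'\<in>A. m' \<noteq> m \<longrightarrow> grevlex_less m' m"
  using assms
proof (induction A rule: finite_ne_induct)
  case (insert x F)
  then obtain m where m: "m \<in> F" "\<forall>m'\<in>F. m' \<noteq> m \<longrightarrow> grevlex_less m' m"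
    by auto
  with insert.hyps have "x \<noteq> m"
    by auto
  then consider "grevlex_less x m" | "grevlex_less m x"
    using grevlex_less_total by blast
  then show ?case
  proof cases
    case 1
    then show ?thesis
      using m by (intro bexI[of _ m]) auto
  next
    case 2
    then show ?thesis
      using m grevlex_less_trans by (intro bexI[of _ x]) auto
  qed
qed auto

lemma lookup_last_le_if_grevlex_less:
  assumes "grevlex_less x l" "mdeg x = mdeg l" "keys x \<subseteq> {..<s}"
  shows "lookup l (s - 1) \<le> lookup x (s - 1)"
proof -
  obtain i where i: "lookup l i < lookup x i" "\<forall>j>i. lookup x j = lookup l j"
    using assms(1,2) unfolding grevlex_less_def by auto
  have "i \<in> keys x"
    using i(1) by (simp add: in_keys_iff)
  then have "i < s"
    using assms(3) by auto
  then show ?thesis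
    using i by (cases "i = s - 1") auto
qed

section \<open>Polynomial arithmetic\<close>

lemma lead_monom_eqI:
  fixes f :: "('a::zero) mpoly"
  assumes "m \<in> keys f" "\<forall>m'\<in>keys f. m' \<noteq> m \<longrightarrow> grevlex_less m' m"
  shows "lead_monom f = m"
  unfolding lead_monom_def
proof (rule the_equality)
  fix x assume x: "x \<in> keys f \<and> (\<forall>m'\<in>keys f. m' \<noteq> x \<longrightarrow> grevlex_less m' x)"
  show "x = m"
  proof (rule ccontr)
    assume "x \<noteq> m"
    then have "grevlex_less x m" "grevlex_less m x"
      using x assms by auto
    then show False
      using grevlex_less_asym by blast
  qed
qed (use assms in auto)

lemma
  fixes f :: "('a::zero) mpoly"
  assumes "f \<noteq> 0"
  shows lead_monom_in_keys: "lead_monom f \<in> keys f"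
    and grevlex_less_lead_monom: "m \<in> keys f \<Longrightarrow> m \<noteq> lead_monom f \<Longrightarrow> grevlex_less m (lead_monom f)"
proof -
  have "keys f \<noteq> {}"
    using assms by simp
  then obtain m where m: "m \<in> keys f" "\<forall>m'\<in>keys f. m' \<noteq> m \<longrightarrow> grevlex_less m' m"
    using ex_grevlex_greatest[OF finite_keys] by blast
  with lead_monom_eqI[OF m] show "lead_monom f \<in> keys f"
    and "m \<in> keys f \<Longrightarrow> m \<noteq> lead_monom f \<Longrightarrow> grevlex_less m (lead_monom f)" for m
    by auto
qed

lemma lead_monom_single: "c \<noteq> 0 \<Longrightarrow> lead_monom (Poly_Mapping.single m c) = m"
  by (rule lead_monom_eqI) auto

lemma lookup_lead_monom_last_le:
  fixes g :: "('a::zero) mpoly"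
  assumes "g \<in> Shom s d" "x \<in> keys g"
  shows "lookup (lead_monom g) (s - 1) \<le> lookup x (s - 1)"
proof (cases "x = lead_monom g")
  case False
  have g: "g \<noteq> 0"
    using assms(2) by auto
  have "mdeg x = mdeg (lead_monom g)" "keys x \<subseteq> {..<s}"
    using assms(1,2) lead_monom_in_keys[OF g] unfolding Shom_def Sring_def by auto
  then show ?thesis
    using lookup_last_le_if_grevlex_less grevlex_less_lead_monom[OF g assms(2) False]
    by blast
qed simp

lemma poly_mapping_sum_single: "p = (\<Sum>x\<in>keys p. Poly_Mapping.single x (lookup p x))"
  by (rule poly_mapping_eqI) (simp add: lookup_sum lookup_single when_def in_keys_iff)

lemma single_eq_zero_iff [simp]: "Poly_Mapping.single m c = 0 \<longleftrightarrow> c = 0"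
  by (metis lookup_single_eq lookup_zero single_zero)

lemma lookup_monom_mult:
  fixes q :: "('a::comm_semiring_1) mpoly"
  shows "lookup (Poly_Mapping.single u c * q) x = (if mdvd u x then c * lookup q (x - u) else 0)"
proof -
  have "Poly_Mapping.single u c * q = (\<Sum>y\<in>keys q. Poly_Mapping.single (u + y) (c * lookup q y))"
    by (subst poly_mapping_sum_single[of q]) (simp add: sum_distrib_left mult_single)
  then have "lookup (Poly_Mapping.single u c * q) x = (\<Sum>y\<in>keys q. if u + y = x then c * lookup q y else 0)"
    by (simp add: lookup_sum lookup_single when_def)
  also have "\<dots> = (if mdvd u x then c * lookup q (x - u) else 0)"
  proof (cases "mdvd u x")
    case True
    have "(\<Sum>y\<in>keys q. if u + y = x then c * lookup q y else 0)
        = (\<Sum>y\<in>keys q. if y = x - u then c * lookup q y else 0)"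
      by (rule sum.cong) (auto simp: add_diff_monom[OF True] dest: sym)
    also have "\<dots> = c * lookup q (x - u)"
      by (simp add: in_keys_iff)
    finally show ?thesis
      using True by simp
  next
    case False
    then have "u + y \<noteq> x" for y
      using mdvd_add_right by blast
    then show ?thesis
      using False by simp
  qed
  finally show ?thesis .
qed

lemma lookup_monom_mult_add:
  fixes q :: "('a::comm_semiring_1) mpoly"
  shows "lookup (Poly_Mapping.single u c * q) (u + k) = c * lookup q k"
  by (simp add: lookup_monom_mult mdvd_add_right)

lemma keys_monom_mult:
  fixes q :: "('a::field) mpoly"
  assumes "c \<noteq> 0"
  shows "keys (Poly_Mapping.single u c * q) = (\<lambda>k. u + k) ` keys q"
proof (rule set_eqI)
  fix x
  show "x \<in> keys (Poly_Mapping.single u c * q) \<longleftrightarrow> x \<in> (\<lambda>k. u + k) ` keys q"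
  proof
    assume "x \<in> keys (Poly_Mapping.single u c * q)"
    then have "mdvd u x" "lookup q (x - u) \<noteq> 0"
      by (auto simp: in_keys_iff lookup_monom_mult split: if_splits)
    then show "x \<in> (\<lambda>k. u + k) ` keys q"
      using add_diff_monom by (auto simp: in_keys_iff intro!: image_eqI[of _ _ "x - u"])
  qed (use assms in \<open>auto simp: in_keys_iff lookup_monom_mult_add\<close>)
qed

lemma lead_monom_monom_mult:
  fixes q :: "('a::field) mpoly"
  assumes "c \<noteq> 0" "q \<noteq> 0"
  shows "lead_monom (Poly_Mapping.single u c * q) = u + lead_monom q"
  using keys_monom_mult[OF assms(1)] lead_monom_in_keys[OF assms(2)]
    grevlex_less_lead_monom[OF assms(2)] grevlex_less_add_left
  by (intro lead_monom_eqI) auto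

definition monom_eval :: "monom \<Rightarrow> (nat \<Rightarrow> 'a::comm_ring_1) \<Rightarrow> 'a" where
  "monom_eval m v = (\<Prod>i\<in>keys m. v i ^ lookup m i)"

lemma monom_eval_eq_prod:
  "finite A \<Longrightarrow> keys m \<subseteq> A \<Longrightarrow> monom_eval m v = (\<Prod>i\<in>A. v i ^ lookup m i)"
  unfolding monom_eval_def by (intro prod.mono_neutral_left) (auto simp: in_keys_iff)

lemma monom_eval_add: "monom_eval (a + b) v = monom_eval a v * monom_eval b v"
proof -
  have "monom_eval (a + b) v = (\<Prod>i\<in>keys a \<union> keys b. v i ^ lookup (a + b) i)"
    by (rule monom_eval_eq_prod) (auto simp: keys_add_monom)
  also have "\<dots> = (\<Prod>i\<in>keys a \<union> keys b. v i ^ lookup a i) * (\<Prod>i\<in>keys a \<union> keys b. v i ^ lookup b i)"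
    by (simp add: lookup_add power_add prod.distrib)
  also have "\<dots> = monom_eval a v * monom_eval b v"
    by (simp add: monom_eval_eq_prod[symmetric])
  finally show ?thesis .
qed

lemma monom_eval_scale: "monom_eval m (\<lambda>k. c * v k) = c ^ mdeg m * monom_eval m v"
  unfolding monom_eval_def mdeg_def by (simp add: power_mult_distrib prod.distrib power_sum)

lemma mpeval_eq_sum_monom_eval: "mpeval f v = (\<Sum>m\<in>keys f. lookup f m * monom_eval m v)"
  unfolding mpeval_def monom_eval_def by simp

lemma mpeval_eq_sum:
  "finite A \<Longrightarrow> keys f \<subseteq> A \<Longrightarrow> mpeval f v = (\<Sum>m\<in>A. lookup f m * monom_eval m v)"
  unfolding mpeval_eq_sum_monom_eval by (intro sum.mono_neutral_left) (auto simp: in_keys_iff)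

lemma mpeval_add: "mpeval (f + g) v = mpeval f v + mpeval g v"
proof -
  let ?A = "keys f \<union> keys g"
  have "mpeval (f + g) v = (\<Sum>m\<in>?A. lookup (f + g) m * monom_eval m v)"
    by (rule mpeval_eq_sum) (use keys_add[of f g] in auto)
  also have "\<dots> = (\<Sum>m\<in>?A. lookup f m * monom_eval m v) + (\<Sum>m\<in>?A. lookup g m * monom_eval m v)"
    by (simp add: lookup_add distrib_right sum.distrib)
  also have "\<dots> = mpeval f v + mpeval g v"
    by (simp add: mpeval_eq_sum[symmetric])
  finally show ?thesis .
qed

lemma mpeval_zero [simp]: "mpeval 0 v = 0"
  unfolding mpeval_def by simp

lemma mpeval_sum: "mpeval (\<Sum>i\<in>I. p i) v = (\<Sum>i\<in>I. mpeval (p i) v)"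
  by (induction I rule: infinite_finite_induct) (simp_all add: mpeval_add)

lemma mpeval_single: "mpeval (Poly_Mapping.single m c) v = c * monom_eval m v"
  unfolding mpeval_eq_sum_monom_eval by auto

lemma mpeval_diff: "mpeval (f - g) v = mpeval f v - mpeval g v"
proof -
  have "mpeval (- g) v = - mpeval g v"
    unfolding mpeval_eq_sum_monom_eval by (simp add: sum_negf)
  then show ?thesis
    using mpeval_add[of f "- g" v] by simp
qed

lemma mpeval_mult: "mpeval (f * g) v = mpeval f v * mpeval g v"
proof -
  have "f * g = (\<Sum>x\<in>keys f. Poly_Mapping.single x (lookup f x)) * (\<Sum>y\<in>keys g. Poly_Mapping.single y (lookup g y))"
    by (subst poly_mapping_sum_single[of f], subst poly_mapping_sum_single[of g]) simp
  also have "\<dots> = (\<Sum>x\<in>keys f. \<Sum>y\<in>keys g. Poly_Mapping.single (x + y) (lookup f x * lookup g y))"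
    by (simp add: sum_product mult_single)
  finally have "mpeval (f * g) v = (\<Sum>x\<in>keys f. \<Sum>y\<in>keys g. lookup f x * lookup g y * monom_eval (x + y) v)"
    by (simp add: mpeval_sum mpeval_single)
  also have "\<dots> = (\<Sum>x\<in>keys f. lookup f x * monom_eval x v) * (\<Sum>y\<in>keys g. lookup g y * monom_eval y v)"
    by (simp add: sum_product monom_eval_add mult_ac)
  finally show ?thesis
    by (simp add: mpeval_eq_sum_monom_eval)
qed

lemma Sring_iff: "f \<in> Sring s \<longleftrightarrow> (\<forall>m\<in>keys f. keys m \<subseteq> {..<s})"
  unfolding Sring_def by auto

lemma Shom_iff: "f \<in> Shom s d \<longleftrightarrow> (\<forall>m\<in>keys f. keys m \<subseteq> {..<s} \<and> mdeg m = d)"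
  unfolding Shom_def Sring_def by auto

lemma Shom_zero [simp]: "0 \<in> Shom s d"
  unfolding Shom_iff by simp

lemma Shom_add: "f \<in> Shom s d \<Longrightarrow> g \<in> Shom s d \<Longrightarrow> f + g \<in> Shom s d"
  unfolding Shom_iff using keys_add[of f g] by blast

lemma Shom_diff: "f \<in> Shom s d \<Longrightarrow> g \<in> Shom s d \<Longrightarrow> f - (g :: ('a::ab_group_add) mpoly) \<in> Shom s d"
  unfolding Shom_iff using keys_add[of f "- g"] by (auto simp: in_keys_iff)

lemma Shom_sum: "(\<And>i. i \<in> I \<Longrightarrow> p i \<in> Shom s d) \<Longrightarrow> (\<Sum>i\<in>I. p i) \<in> Shom s d"
  by (induction I rule: infinite_finite_induct) (simp_all add: Shom_add)

lemma Shom_single: "m \<in> monoms_deg s d \<Longrightarrow> Poly_Mapping.single m c \<in> Shom s d"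
  unfolding Shom_iff monoms_deg_def by simp

lemma Shom_mult: "f \<in> Shom s d \<Longrightarrow> g \<in> Shom s e \<Longrightarrow> f * g \<in> Shom s (d + e)"
  unfolding Shom_iff using keys_mult[of f g] by (force simp: keys_add_monom mdeg_add)

lemma Sring_mult: "f \<in> Sring s \<Longrightarrow> g \<in> Sring s \<Longrightarrow> f * g \<in> Sring s"
  unfolding Sring_iff using keys_mult[of f g] by (force simp: keys_add_monom)

lemma Sring_single: "keys m \<subseteq> {..<s} \<Longrightarrow> Poly_Mapping.single m c \<in> Sring s"
  unfolding Sring_iff by simp

lemma mpeval_scale:
  assumes "f \<in> Shom s d"
  shows "mpeval f (\<lambda>k. c * v k) = c ^ d * mpeval f v"
proof -
  have "mpeval f (\<lambda>k. c * v k) = (\<Sum>m\<in>keys f. lookup f m * (c ^ d * monom_eval m v))"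
    unfolding mpeval_eq_sum_monom_eval monom_eval_scale
    using assms unfolding Shom_iff by (intro sum.cong) auto
  then show ?thesis
    by (simp add: mpeval_eq_sum_monom_eval sum_distrib_left mult_ac)
qed

definition hom_comp :: "nat \<Rightarrow> ('a::zero) mpoly \<Rightarrow> 'a mpoly" where
  "hom_comp k p = Abs_poly_mapping (\<lambda>m. if mdeg m = k then lookup p m else 0)"

lemma lookup_hom_comp: "lookup (hom_comp k p) m = (if mdeg m = k then lookup p m else 0)"
proof -
  have "finite {m. (if mdeg m = k then lookup p m else 0) \<noteq> 0}"
    by (rule finite_subset[of _ "keys p"]) (auto simp: in_keys_iff)
  then show ?thesis
    unfolding hom_comp_def by simp
qed

lemma keys_hom_comp: "keys (hom_comp k p) = {m \<in> keys p. mdeg m = k}"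
  by (auto simp: in_keys_iff lookup_hom_comp split: if_splits)

lemma hom_comp_add: "hom_comp k (p + q) = hom_comp k p + hom_comp k q"
  by (rule poly_mapping_eqI) (simp add: lookup_hom_comp lookup_add)

lemma hom_comp_zero [simp]: "hom_comp k 0 = 0"
  by (rule poly_mapping_eqI) (simp add: lookup_hom_comp)

lemma hom_comp_sum: "hom_comp k (\<Sum>i\<in>I. p i) = (\<Sum>i\<in>I. hom_comp k (p i))"
  by (induction I rule: infinite_finite_induct) (simp_all add: hom_comp_add)

lemma hom_comp_single:
  "hom_comp k (Poly_Mapping.single z c) = (if mdeg z = k then Poly_Mapping.single z c else 0)"
  by (rule poly_mapping_eqI) (simp add: lookup_hom_comp lookup_single when_def)

lemma hom_comp_Shom: "f \<in> Sring s \<Longrightarrow> hom_comp k f \<in> Shom s k"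
  unfolding Shom_iff Sring_iff keys_hom_comp by auto

lemma hom_comp_mult_homogeneous:
  fixes a h :: "('a::comm_semiring_1) mpoly"
  assumes h: "\<forall>y\<in>keys h. mdeg y = e"
  shows "hom_comp k (a * h) = (if e \<le> k then hom_comp (k - e) a * h else 0)"
proof -
  have single_mult: "Poly_Mapping.single x c * h = (\<Sum>y\<in>keys h. Poly_Mapping.single (x + y) (c * lookup h y))"
    for x c
    by (subst poly_mapping_sum_single[of h]) (simp add: sum_distrib_left mult_single)
  have "hom_comp k (a * h) = (\<Sum>x\<in>keys a. if mdeg x + e = k then Poly_Mapping.single x (lookup a x) * h else 0)"
    by (subst poly_mapping_sum_single[of a])
      (use h in \<open>simp add: sum_distrib_right single_mult hom_comp_sum hom_comp_single mdeg_add,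
                 intro sum.cong, simp_all add: single_mult\<close>)
  also have "\<dots> = (if e \<le> k then hom_comp (k - e) a * h else 0)"
    by (subst (3) poly_mapping_sum_single[of a])
      (auto simp: hom_comp_sum hom_comp_single sum_distrib_right intro!: sum.cong)
  finally show ?thesis .
qed

lemma ideal_gen_base: "g \<in> A \<Longrightarrow> g \<in> ideal_gen s (A :: ('a::comm_ring_1) mpoly set)"
  unfolding ideal_gen_def
  by (intro CollectI exI[of _ "{g}"] exI[of _ "\<lambda>_. 1"]) (simp add: Sring_iff)

lemma ideal_gen_mult:
  assumes "f \<in> ideal_gen s (A :: ('a::comm_ring_1) mpoly set)" "b \<in> Sring s"
  shows "b * f \<in> ideal_gen s A"
proof -
  obtain F c where F: "finite F" "F \<subseteq> A" "\<forall>g\<in>F. c g \<in> Sring s" "f = (\<Sum>g\<in>F. c g * g)"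
    using assms(1) unfolding ideal_gen_def by blast
  then have "b * f = (\<Sum>g\<in>F. (b * c g) * g)" "\<forall>g\<in>F. b * c g \<in> Sring s"
    using assms(2) by (simp_all add: sum_distrib_left mult_ac Sring_mult)
  with F(1,2) show ?thesis
    unfolding ideal_gen_def by (intro CollectI exI[of _ F] exI[of _ "\<lambda>g. b * c g"]) simp
qed

lemma ideal_gen_induct [consumes 1, case_names zero add gen]:
  assumes "f \<in> ideal_gen s (A :: ('a::comm_ring_1) mpoly set)"
    and "P 0" "\<And>x y. P x \<Longrightarrow> P y \<Longrightarrow> P (x + y)" "\<And>a g. a \<in> Sring s \<Longrightarrow> g \<in> A \<Longrightarrow> P (a * g)"
  shows "P f"
proof -
  obtain F c where F: "finite F" "F \<subseteq> A" "\<forall>g\<in>F. c g \<in> Sring s" "f = (\<Sum>g\<in>F. c g * g)"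
    using assms(1) unfolding ideal_gen_def by blast
  have "P (\<Sum>g\<in>F. c g * g)"
    using F(1-3) by (induction F rule: finite_induct) (auto intro: assms(2-4))
  then show ?thesis
    using F(4) by simp
qed

definition ts_sq_monom :: "nat \<Rightarrow> monom" where
  "ts_sq_monom s = Poly_Mapping.single (s - 1) 2"

definition ts_sq :: "nat \<Rightarrow> ('a::field) mpoly" where
  "ts_sq s = Poly_Mapping.single (ts_sq_monom s) 1"

lemma mdeg_ts_sq_monom [simp]: "mdeg (ts_sq_monom s) = 2"
  unfolding ts_sq_monom_def mdeg_def by simp

lemma keys_ts_sq_monom: "keys (ts_sq_monom s) = {s - 1}"
  unfolding ts_sq_monom_def by simp

lemma lookup_ts_sq_monom: "lookup (ts_sq_monom s) i = (if i = s - 1 then 2 else 0)"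
  unfolding ts_sq_monom_def by (simp add: lookup_single when_def)

lemma mdvd_ts_sq_monom_iff: "mdvd (ts_sq_monom s) x \<longleftrightarrow> 2 \<le> lookup x (s - 1)"
  unfolding mdvd_def by (auto simp: lookup_ts_sq_monom)

lemma ts_sq_Shom: "s \<ge> 1 \<Longrightarrow> ts_sq s \<in> Shom s 2"
  unfolding ts_sq_def ts_sq_monom_def by (intro Shom_single) (auto simp: monoms_deg_def mdeg_def)

lemma lead_monom_ts_sq [simp]: "lead_monom (ts_sq s) = ts_sq_monom s"
  unfolding ts_sq_def by (simp add: lead_monom_single)

lemma mpeval_ts_sq: "mpeval (ts_sq s) v = v (s - 1) ^ 2"
  unfolding ts_sq_def ts_sq_monom_def by (simp add: mpeval_single monom_eval_def lookup_single)

lemma lookup_last_ge_if_in_keys_ts_sq_mult: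
  "x \<in> keys (ts_sq s * (q :: ('a::field) mpoly)) \<Longrightarrow> 2 \<le> lookup x (s - 1)"
  unfolding ts_sq_def using keys_monom_mult[of 1 "ts_sq_monom s" q]
  by (auto simp: lookup_add lookup_ts_sq_monom)

lemma ts_sq_neq_zero [simp]: "ts_sq s \<noteq> (0 :: ('a::field) mpoly)"
  unfolding ts_sq_def by simp

lemma lead_monom_ts_sq_mult:
  "(g :: ('a::field) mpoly) \<noteq> 0 \<Longrightarrow> lead_monom (ts_sq s * g) = ts_sq_monom s + lead_monom g"
  unfolding ts_sq_def by (rule lead_monom_monom_mult[OF one_neq_zero])

section \<open>The points of X and the vanishing ideal\<close>

locale graph_torus =
  fixes n :: nat and es :: "nat set list"
  assumes simple: "simple_graph n es" and edges_nonempty: "length es \<ge> 1"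
begin

abbreviation s :: nat where
  "s \<equiv> length es"

lemma edge_map_neq_zero:
  fixes x :: "nat \<Rightarrow> 'a::field"
  assumes "\<forall>i\<in>{1..n}. x i \<noteq> 0" "k < s"
  shows "edge_map es x k \<noteq> 0"
proof -
  have "es ! k \<in> set es"
    using assms(2) by simp
  then have "es ! k \<subseteq> {1..n}" "finite (es ! k)"
    using simple unfolding simple_graph_def by (auto intro: card_ge_0_finite)
  then show ?thesis
    using assms unfolding edge_map_def by auto
qed

lemma torus_XE:
  assumes "(P :: (nat \<Rightarrow> 'a::field) set) \<in> torus_X n es"
  obtains w where "P = proj_pt w" "\<And>k. k < s \<Longrightarrow> w k \<noteq> 0"
  using assms edge_map_neq_zero unfolding torus_X_def by blast

lemma mem_proj_pt_iff: "v \<in> proj_pt w \<longleftrightarrow> (\<exists>c. c \<noteq> 0 \<and> v = (\<lambda>k. c * w k))"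
  unfolding proj_pt_def by auto

lemma rep_proj_pt: "rep (proj_pt w) \<in> proj_pt w"
proof -
  have "w \<in> proj_pt w"
    unfolding mem_proj_pt_iff by (intro exI[of _ 1]) simp
  then show ?thesis
    unfolding rep_def by (rule someI[where P = "\<lambda>v. v \<in> proj_pt w"])
qed

lemma torus_X_coord_neq_zero:
  assumes "(P :: (nat \<Rightarrow> 'a::field) set) \<in> torus_X n es" "v \<in> P" "k < s"
  shows "v k \<noteq> 0"
proof -
  obtain w where w: "P = proj_pt w" "\<And>k. k < s \<Longrightarrow> w k \<noteq> 0"
    using torus_XE[OF assms(1)] by blast
  with assms(2) obtain c where "c \<noteq> 0" "v = (\<lambda>k. c * w k)"
    using mem_proj_pt_iff by blast
  then show ?thesis
    using w(2)[OF assms(3)] by simp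
qed

lemma rep_torus_X:
  assumes "(P :: (nat \<Rightarrow> 'a::field) set) \<in> torus_X n es"
  shows "rep P \<in> P"
  using torus_XE[OF assms] rep_proj_pt by metis

definition vanishes_on_X :: "('a::field) mpoly \<Rightarrow> bool" where
  "vanishes_on_X f \<longleftrightarrow> (\<forall>P\<in>torus_X n es. \<forall>v\<in>P. mpeval f v = 0)"

definition vanishing_hom :: "nat \<Rightarrow> ('a::field) mpoly set" where
  "vanishing_hom d = {f \<in> Shom s d. vanishes_on_X f}"

lemma vanishes_on_X_iff_rep:
  assumes "(f :: ('a::field) mpoly) \<in> Shom s d"
  shows "vanishes_on_X f \<longleftrightarrow> (\<forall>P\<in>torus_X n es. mpeval f (rep P) = 0)"
proof
  assume h: "\<forall>P\<in>torus_X n es. mpeval f (rep P) = 0"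
  show "vanishes_on_X f"
    unfolding vanishes_on_X_def
  proof (intro ballI)
    fix P :: "(nat \<Rightarrow> 'a) set" and v assume P: "P \<in> torus_X n es" and v: "v \<in> P"
    obtain w where w: "P = proj_pt w"
      using torus_XE[OF P] by blast
    obtain c where c: "c \<noteq> 0" "v = (\<lambda>k. c * w k)"
      using v w mem_proj_pt_iff by blast
    obtain c0 where c0: "c0 \<noteq> 0" "rep P = (\<lambda>k. c0 * w k)"
      using rep_torus_X[OF P] w mem_proj_pt_iff by blast
    have "c0 ^ d * mpeval f w = 0"
      using h P c0 mpeval_scale[OF assms] by metis
    then show "mpeval f v = 0"
      using c c0 mpeval_scale[OF assms] by simp
  qed
qed (use rep_torus_X in \<open>auto simp: vanishes_on_X_def\<close>)

lemma vanishes_on_X_ts_sq_mult_iff: "vanishes_on_X (ts_sq s * (g :: ('a::field) mpoly)) \<longleftrightarrow> vanishes_on_X g"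
  using torus_X_coord_neq_zero[of _ _ "s - 1"] edges_nonempty
  unfolding vanishes_on_X_def by (auto simp: mpeval_mult mpeval_ts_sq)

lemma vanishing_hom_zero [simp]: "0 \<in> vanishing_hom d"
  unfolding vanishing_hom_def vanishes_on_X_def by simp

lemma vanishing_hom_add: "f \<in> vanishing_hom d \<Longrightarrow> g \<in> vanishing_hom d \<Longrightarrow> f + g \<in> vanishing_hom d"
  unfolding vanishing_hom_def vanishes_on_X_def by (simp add: Shom_add mpeval_add)

lemma vanishing_hom_mult:
  "a \<in> Shom s e \<Longrightarrow> h \<in> vanishing_hom d \<Longrightarrow> a * h \<in> vanishing_hom (e + d)"
  unfolding vanishing_hom_def vanishes_on_X_def by (simp add: Shom_mult mpeval_mult)

section \<open>Standard monomials of I(X) and the dimension of the code\<close>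

text \<open>Sets of monomials do not mention the field, hence the explicit type argument.\<close>
definition init_monoms :: "nat \<Rightarrow> ('a::field) itself \<Rightarrow> monom set" where
  "init_monoms d _ = {lead_monom f | f. f \<in> (vanishing_hom d :: 'a mpoly set) \<and> f \<noteq> 0}"

definition std_monoms_X :: "nat \<Rightarrow> ('a::field) itself \<Rightarrow> monom set" where
  "std_monoms_X d T = monoms_deg s d - init_monoms d T"

lemma init_monomsI:
  "(f :: ('a::field) mpoly) \<in> vanishing_hom d \<Longrightarrow> f \<noteq> 0 \<Longrightarrow> lead_monom f \<in> init_monoms d TYPE('a)"
  unfolding init_monoms_def by blast

lemma init_monomsE:
  assumes "m \<in> init_monoms d TYPE('a::field)"
  obtains f :: "('a::field) mpoly" where "f \<in> vanishing_hom d" "f \<noteq> 0" "lead_monom f = m"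
  using assms unfolding init_monoms_def by blast

lemma finite_std_monoms_X: "finite (std_monoms_X d T)"
  unfolding std_monoms_X_def using finite_monoms_deg by auto

lemma Shom_single_std: "m \<in> std_monoms_X d T \<Longrightarrow> Poly_Mapping.single m c \<in> Shom s d"
  unfolding std_monoms_X_def by (intro Shom_single) simp

lemma vanishing_hom_eq_zero_if_keys_std:
  assumes "(p :: ('a::field) mpoly) \<in> vanishing_hom d" "keys p \<subseteq> std_monoms_X d TYPE('a)"
  shows "p = 0"
proof (rule ccontr)
  assume "p \<noteq> 0"
  then have "lead_monom p \<in> init_monoms d TYPE('a)" "lead_monom p \<in> std_monoms_X d TYPE('a)"
    using init_monomsI[OF assms(1)] lead_monom_in_keys assms(2) by auto
  then show False
    unfolding std_monoms_X_def by simp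
qed

text \<open>One division step: the greatest non-standard monomial of f is the leading monomial of some
  element of I(X)_d, and subtracting a multiple of that element removes it.\<close>
lemma reduce_greatest_nonstd:
  fixes f :: "('a::field) mpoly"
  assumes f: "f \<in> Shom s d"
    and m: "m \<in> keys f - std_monoms_X d TYPE('a)"
      "\<forall>m'\<in>keys f - std_monoms_X d TYPE('a). m' \<noteq> m \<longrightarrow> grevlex_less m' m"
  obtains h where "h \<in> vanishing_hom d" "\<forall>x\<in>keys (f - h) - std_monoms_X d TYPE('a). grevlex_less x m"
proof -
  let ?A = "std_monoms_X d TYPE('a)"
  have "m \<in> monoms_deg s d"
    using m(1) f unfolding Shom_iff monoms_deg_def by auto
  then have "m \<in> init_monoms d TYPE('a)"
    using m(1) unfolding std_monoms_X_def by auto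
  then obtain g :: "'a mpoly" where g: "g \<in> vanishing_hom d" "g \<noteq> 0" "lead_monom g = m"
    by (rule init_monomsE)
  have gm: "lookup g m \<noteq> 0"
    using lead_monom_in_keys[OF g(2)] g(3) by (simp add: in_keys_iff)
  define h where "h = Poly_Mapping.single 0 (lookup f m / lookup g m) * g"
  have "Poly_Mapping.single 0 (lookup f m / lookup g m) \<in> Shom s 0"
    by (rule Shom_single) (simp add: monoms_deg_def mdeg_def)
  then have h: "h \<in> vanishing_hom d"
    unfolding h_def using vanishing_hom_mult[OF _ g(1)] by fastforce
  have lookup_h: "lookup h x = lookup f m / lookup g m * lookup g x" for x
    unfolding h_def using lookup_monom_mult_add[of 0 _ g x] by simp
  have "grevlex_less x m" if x: "x \<in> keys (f - h) - ?A" for x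
  proof -
    have "x \<noteq> m"
      using x gm by (auto simp: in_keys_iff lookup_minus lookup_h)
    moreover have "x \<in> keys f \<or> x \<in> keys g"
      using x by (auto simp: in_keys_iff lookup_minus lookup_h)
    ultimately show ?thesis
      using x m(2) grevlex_less_lead_monom[OF g(2)] g(3) by auto
  qed
  then show ?thesis
    using that h by blast
qed

lemma ex_std_remainder:
  fixes f :: "('a::field) mpoly"
  assumes "f \<in> Shom s d"
  shows "\<exists>g \<in> Shom s d. keys g \<subseteq> std_monoms_X d TYPE('a) \<and> f - g \<in> vanishing_hom d"
  using assms
proof (induction "card {m' \<in> monoms_deg s d. \<exists>x\<in>keys f - std_monoms_X d TYPE('a). m' = x \<or> grevlex_less m' x}"
    arbitrary: f rule: less_induct)
  case less
  let ?A = "std_monoms_X d TYPE('a)"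
  let ?D = "\<lambda>f :: 'a mpoly. {m' \<in> monoms_deg s d. \<exists>x\<in>keys f - ?A. m' = x \<or> grevlex_less m' x}"
  show ?case
  proof (cases "keys f \<subseteq> ?A")
    case True
    then show ?thesis
      using less.prems by force
  next
    case False
    then obtain m where m: "m \<in> keys f - ?A" "\<forall>m'\<in>keys f - ?A. m' \<noteq> m \<longrightarrow> grevlex_less m' m"
      using ex_grevlex_greatest[of "keys f - ?A"] by auto
    obtain h where h: "h \<in> vanishing_hom d" "\<forall>x\<in>keys (f - h) - ?A. grevlex_less x m"
      using reduce_greatest_nonstd[OF less.prems m] by blast
    have fh: "f - h \<in> Shom s d"
      using Shom_diff[OF less.prems] h(1) unfolding vanishing_hom_def by simp
    have m_deg: "m \<in> monoms_deg s d"
      using m(1) less.prems unfolding Shom_iff monoms_deg_def by auto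
    let ?below = "{m' \<in> monoms_deg s d. grevlex_less m' m}"
    have fin: "finite (?D f)"
      by (rule finite_subset[OF _ finite_monoms_deg]) blast
    have below: "?below \<subset> ?D f"
      using m(1) m_deg grevlex_less_irrefl by blast
    have "?D (f - h) \<subseteq> ?below"
      using h(2) grevlex_less_trans by blast
    then have "card (?D (f - h)) \<le> card ?below"
      using finite_subset[OF psubset_imp_subset[OF below] fin] by (rule card_mono[rotated])
    also have "\<dots> < card (?D f)"
      by (rule psubset_card_mono[OF fin below])
    finally have "card (?D (f - h)) < card (?D f)" .
    then obtain g where g: "g \<in> Shom s d" "keys g \<subseteq> ?A" "f - h - g \<in> vanishing_hom d"
      using less.hyps[OF _ fh] by blast
    have "f - g = (f - h - g) + h"
      by simp
    then show ?thesis
      using g vanishing_hom_add[OF g(3) h(1)] by metis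
  qed
qed

definition code_word :: "nat \<Rightarrow> ('a::field) mpoly \<Rightarrow> (nat \<Rightarrow> 'a) set \<Rightarrow> 'a" where
  "code_word d f = (\<lambda>P. if P \<in> torus_X n es then mpeval f (rep P) / rep P 0 ^ d else 0)"

lemma param_code_eq_image: "param_code n es d = code_word d ` Shom s d"
  unfolding param_code_def code_word_def by auto

lemma code_word_add: "code_word d (f + g) = code_word d f + code_word d g"
  unfolding code_word_def by (auto simp: fun_eq_iff mpeval_add add_divide_distrib)

lemma code_word_diff: "code_word d (f - g) = code_word d f - code_word d g"
  unfolding code_word_def by (auto simp: fun_eq_iff mpeval_diff diff_divide_distrib)

lemma code_word_sum: "code_word d (\<Sum>i\<in>I. p i) = (\<Sum>i\<in>I. code_word d (p i))"
proof (induction I rule: infinite_finite_induct)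
  case (infinite A)
  then show ?case
    by (simp add: code_word_def fun_eq_iff)
next
  case empty
  then show ?case
    by (simp add: code_word_def fun_eq_iff)
qed (simp add: code_word_add)

lemma code_word_single:
  "code_word d (Poly_Mapping.single m c) = (\<lambda>P. c * code_word d (Poly_Mapping.single m 1) P)"
  unfolding code_word_def by (auto simp: fun_eq_iff mpeval_single)

lemma code_word_eq_zero_iff:
  assumes "(f :: ('a::field) mpoly) \<in> Shom s d"
  shows "code_word d f = 0 \<longleftrightarrow> f \<in> vanishing_hom d"
proof -
  have "rep P 0 \<noteq> 0" if "P \<in> torus_X n es" for P :: "(nat \<Rightarrow> 'a) set"
    using torus_X_coord_neq_zero[OF that rep_torus_X[OF that]] edges_nonempty by (simp add: Suc_le_eq)
  then have "code_word d f = 0 \<longleftrightarrow> (\<forall>P\<in>torus_X n es. mpeval f (rep P) = 0)"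
    unfolding code_word_def fun_eq_iff by force
  then show ?thesis
    using vanishes_on_X_iff_rep[OF assms] assms unfolding vanishing_hom_def by simp
qed

lemma inj_on_code_word_std:
  "inj_on (\<lambda>m. code_word d (Poly_Mapping.single m (1::'a::field))) (std_monoms_X d TYPE('a))"
proof (rule inj_onI)
  fix m1 m2
  assume m12: "m1 \<in> std_monoms_X d TYPE('a)" "m2 \<in> std_monoms_X d TYPE('a)"
    and eq: "code_word d (Poly_Mapping.single m1 (1::'a)) = code_word d (Poly_Mapping.single m2 1)"
  let ?p = "Poly_Mapping.single m1 (1::'a) - Poly_Mapping.single m2 1"
  have "?p \<in> Shom s d"
    using Shom_single_std m12 by (intro Shom_diff)
  moreover have "code_word d ?p = 0"
    using eq by (simp add: code_word_diff)
  ultimately have "?p \<in> vanishing_hom d"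
    using code_word_eq_zero_iff by blast
  moreover have "keys ?p \<subseteq> std_monoms_X d TYPE('a)"
    using m12 keys_add[of "Poly_Mapping.single m1 (1::'a)" "- Poly_Mapping.single m2 1"]
    by (auto simp: in_keys_iff)
  ultimately have "?p = 0"
    by (rule vanishing_hom_eq_zero_if_keys_std)
  then have "lookup ?p m1 = 0"
    by simp
  then show "m1 = m2"
    by (simp add: lookup_minus lookup_single when_def split: if_splits)
qed

lemma code_word_std_combination_eq_zero:
  fixes c :: "monom \<Rightarrow> 'a::field"
  assumes "code_word d (\<Sum>m\<in>std_monoms_X d TYPE('a). Poly_Mapping.single m (c m)) = 0"
    and "m \<in> std_monoms_X d TYPE('a)"
  shows "c m = 0"
proof -
  let ?p = "\<Sum>m\<in>std_monoms_X d TYPE('a). Poly_Mapping.single m (c m)"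
  have "?p \<in> Shom s d"
    by (intro Shom_sum Shom_single_std)
  then have "?p \<in> vanishing_hom d"
    using assms(1) code_word_eq_zero_iff by blast
  moreover have "keys ?p \<subseteq> std_monoms_X d TYPE('a)"
    using keys_sum[of "\<lambda>m. Poly_Mapping.single m (c m)" "std_monoms_X d TYPE('a)"] by auto
  ultimately have "?p = 0"
    by (rule vanishing_hom_eq_zero_if_keys_std)
  then have "lookup ?p m = 0"
    by simp
  then show ?thesis
    using assms(2) by (simp add: lookup_sum lookup_single when_def finite_std_monoms_X)
qed

lemma vector_space_fun: "vector_space (\<lambda>c (f :: 'b \<Rightarrow> 'a::field) x. c * f x)"
  by unfold_locales (auto simp: fun_eq_iff algebra_simps)

text \<open>The code words of the standard monomials form a basis of C_X(d).\<close>
lemma fdim_param_code: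
  "fdim (param_code n es d :: ((nat \<Rightarrow> 'a::field) set \<Rightarrow> 'a) set) = card (std_monoms_X d TYPE('a))"
proof -
  interpret VS: vector_space "\<lambda>c (f :: (nat \<Rightarrow> 'a) set \<Rightarrow> 'a) x. c * f x"
    by (rule vector_space_fun)
  let ?A = "std_monoms_X d TYPE('a)"
  define e where "e m = code_word d (Poly_Mapping.single m (1::'a))" for m
  have inj: "inj_on e ?A"
    unfolding e_def by (rule inj_on_code_word_std)
  have code_word_single_sum: "code_word d (\<Sum>m\<in>M. Poly_Mapping.single m (c m)) = (\<Sum>m\<in>M. (\<lambda>P. c m * e m P))"
    for M and c :: "monom \<Rightarrow> 'a"
    unfolding code_word_sum e_def by (subst code_word_single) simp
  have "VS.independent (e ` ?A)"
  proof (rule VS.independent_if_scalars_zero)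
    fix u x
    assume u: "(\<Sum>x\<in>e ` ?A. (\<lambda>P. u x * x P)) = 0" and x: "x \<in> e ` ?A"
    then obtain m where m: "m \<in> ?A" "x = e m"
      by blast
    have "code_word d (\<Sum>m\<in>?A. Poly_Mapping.single m (u (e m))) = 0"
      using u by (simp add: code_word_single_sum sum.reindex[OF inj])
    then have "u (e m) = 0"
      using code_word_std_combination_eq_zero[where c = "\<lambda>m. u (e m)"] m(1) by simp
    then show "u x = 0"
      using m(2) by simp
  qed (simp add: finite_std_monoms_X)
  moreover have "param_code n es d \<subseteq> VS.span (e ` ?A)"
  proof
    fix y assume "y \<in> (param_code n es d :: ((nat \<Rightarrow> 'a) set \<Rightarrow> 'a) set)"
    then obtain f :: "'a mpoly" where f: "f \<in> Shom s d" "y = code_word d f"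
      unfolding param_code_eq_image by auto
    obtain g where g: "g \<in> Shom s d" "keys g \<subseteq> ?A" "f - g \<in> vanishing_hom d"
      using ex_std_remainder[OF f(1)] by blast
    have "y = code_word d (\<Sum>m\<in>keys g. Poly_Mapping.single m (lookup g m))"
      using f code_word_eq_zero_iff[OF Shom_diff[OF f(1) g(1)]] g(3)
      by (simp add: code_word_diff flip: poly_mapping_sum_single)
    also have "\<dots> \<in> VS.span (e ` ?A)"
      unfolding code_word_single_sum using g(2) by (intro VS.span_sum VS.span_scale VS.span_base) auto
    finally show "y \<in> VS.span (e ` ?A)" .
  qed
  moreover have "e ` ?A \<subseteq> param_code n es d"
    unfolding param_code_eq_image e_def using Shom_single_std by blast
  ultimately have "card (e ` ?A) = VS.dim (param_code n es d)"
    using VS.basis_card_eq_dim by blast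
  then show ?thesis
    unfolding fdim_def using card_image[OF inj] by simp
qed

section \<open>Standard monomials of (I(X), t_s^2)\<close>

lemma vanishing_ideal_eq: "vanishing_ideal n es = ideal_gen s (\<Union>d. vanishing_hom d :: ('a::field) mpoly set)"
  unfolding vanishing_ideal_def vanishing_hom_def vanishes_on_X_def by (rule arg_cong[where f = "ideal_gen s"]) auto

lemma IXts2_eq: "IXts2 n es = ideal_gen s (vanishing_ideal n es \<union> {ts_sq s :: ('a::field) mpoly})"
  unfolding IXts2_def ts_sq_def ts_sq_monom_def ..

lemma vanishing_hom_subset_IXts2: "vanishing_hom d \<subseteq> (IXts2 n es :: ('a::field) mpoly set)"
  unfolding IXts2_eq vanishing_ideal_eq by (blast intro: ideal_gen_base)

lemma monom_mult_ts_sq_IXts2: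
  "keys u \<subseteq> {..<s} \<Longrightarrow> Poly_Mapping.single u 1 * ts_sq s \<in> (IXts2 n es :: ('a::field) mpoly set)"
  unfolding IXts2_eq by (intro ideal_gen_mult ideal_gen_base Sring_single) auto

definition vanishing_plus_ts_sq :: "nat \<Rightarrow> ('a::field) mpoly set" where
  "vanishing_plus_ts_sq k = {g + ts_sq s * q | g q. g \<in> vanishing_hom k}"

lemma vanishing_plus_ts_sqI: "g \<in> vanishing_hom k \<Longrightarrow> g + ts_sq s * q \<in> vanishing_plus_ts_sq k"
  unfolding vanishing_plus_ts_sq_def by blast

lemma vanishing_plus_ts_sq_zero [simp]: "0 \<in> vanishing_plus_ts_sq k"
  using vanishing_plus_ts_sqI[where g = 0 and q = 0] by simp

lemma vanishing_plus_ts_sq_add: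
  assumes "f \<in> vanishing_plus_ts_sq k" "g \<in> vanishing_plus_ts_sq k"
  shows "f + g \<in> vanishing_plus_ts_sq k"
proof -
  obtain f1 q1 g1 q2 where "f = f1 + ts_sq s * q1" "g = g1 + ts_sq s * q2"
    "f1 \<in> vanishing_hom k" "g1 \<in> vanishing_hom k"
    using assms unfolding vanishing_plus_ts_sq_def by blast
  then have "f + g = (f1 + g1) + ts_sq s * (q1 + q2)" "f1 + g1 \<in> vanishing_hom k"
    by (simp_all add: algebra_simps vanishing_hom_add)
  then show ?thesis
    by (simp add: vanishing_plus_ts_sqI)
qed

lemma hom_comp_mult_vanishing_hom:
  assumes "a \<in> Sring s" "h \<in> vanishing_hom e"
  shows "hom_comp k (a * h) \<in> vanishing_plus_ts_sq k"
proof -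
  have h: "\<forall>y\<in>keys h. mdeg y = e"
    using assms(2) unfolding vanishing_hom_def Shom_iff by auto
  have "hom_comp (k - e) a * h \<in> vanishing_hom (k - e + e)"
    using vanishing_hom_mult[OF hom_comp_Shom[OF assms(1)] assms(2)] .
  then show ?thesis
    using vanishing_plus_ts_sqI[where q = 0] unfolding hom_comp_mult_homogeneous[OF h] by auto
qed

lemma hom_comp_mult_ts_sq: "hom_comp k (a * ts_sq s) \<in> (vanishing_plus_ts_sq k :: ('a::field) mpoly set)"
proof -
  have "\<forall>y\<in>keys (ts_sq s :: 'a mpoly). mdeg y = 2"
    using ts_sq_Shom edges_nonempty unfolding Shom_iff by blast
  then have "hom_comp k (a * ts_sq s) = 0 + ts_sq s * (if 2 \<le> k then hom_comp (k - 2) a else 0)"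
    by (simp add: hom_comp_mult_homogeneous[where e = 2] mult.commute)
  then show ?thesis
    using vanishing_plus_ts_sqI[OF vanishing_hom_zero] by metis
qed

text \<open>Both generators of (I(X), t_s^2) are homogeneous, so the homogeneous components of its
  elements stay in I(X)_k + t_s^2 S.\<close>
lemma hom_comp_IXts2:
  assumes "(f :: ('a::field) mpoly) \<in> IXts2 n es"
  shows "hom_comp k f \<in> vanishing_plus_ts_sq k"
proof -
  let ?P = "\<lambda>f :: 'a mpoly. \<forall>k. hom_comp k f \<in> vanishing_plus_ts_sq k"
  have vanishing: "?P g" if "g \<in> ideal_gen s (\<Union>d. vanishing_hom d)" for g
    using that by (induction rule: ideal_gen_induct)
      (auto simp: hom_comp_add vanishing_plus_ts_sq_add intro: hom_comp_mult_vanishing_hom)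
  from assms have "?P f"
    unfolding IXts2_eq
  proof (induction rule: ideal_gen_induct)
    case (gen a g)
    then consider "g \<in> vanishing_ideal n es" | "g = ts_sq s"
      by blast
    then show ?case
    proof cases
      case 1
      then show ?thesis
        using vanishing ideal_gen_mult[OF _ gen(1)] unfolding vanishing_ideal_eq by blast
    qed (simp add: hom_comp_mult_ts_sq)
  qed (auto simp: hom_comp_add vanishing_plus_ts_sq_add)
  then show ?thesis
    by blast
qed

text \<open>If the leading monomial of h = g + t_s^2 q is not divisible by t_s^2, it does not occur in
  t_s^2 q; neither does the leading monomial of g, whose t_s-exponent is even smaller. So the
  two leading monomials agree.\<close>
lemma lead_monom_vanishing_plus_ts_sq:
  fixes h :: "('a::field) mpoly"
  assumes "h \<in> vanishing_plus_ts_sq d" "h \<noteq> 0" "lookup (lead_monom h) (s - 1) < 2"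
  shows "lead_monom h \<in> init_monoms d TYPE('a)"
proof -
  obtain g q where gq: "h = g + ts_sq s * q" "g \<in> vanishing_hom d"
    using assms(1) unfolding vanishing_plus_ts_sq_def by blast
  let ?m = "lead_monom h"
  have not_in_ts_sq: "x \<notin> keys (ts_sq s * q)" if "lookup x (s - 1) < 2" for x
    using that lookup_last_ge_if_in_keys_ts_sq_mult by fastforce
  have m_in_g: "?m \<in> keys g"
    using lead_monom_in_keys[OF assms(2)] not_in_ts_sq[OF assms(3)] gq(1)
    by (simp add: in_keys_iff lookup_add)
  then have g: "g \<noteq> 0"
    by auto
  have "lookup (lead_monom g) (s - 1) \<le> lookup ?m (s - 1)"
    using gq(2) m_in_g unfolding vanishing_hom_def by (intro lookup_lead_monom_last_le) auto
  then have "lead_monom g \<in> keys h"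
    using lead_monom_in_keys[OF g] not_in_ts_sq[of "lead_monom g"] assms(3) gq(1)
    by (simp add: in_keys_iff lookup_add)
  then have "lead_monom g = ?m"
    using grevlex_less_lead_monom[OF assms(2)] grevlex_less_lead_monom[OF g m_in_g] grevlex_less_asym
    by metis
  then show ?thesis
    using init_monomsI[OF gq(2) g] by simp
qed

lemma init_monoms_if_mdvd_lead_monom_IXts2:
  fixes f :: "('a::field) mpoly"
  assumes f: "f \<in> IXts2 n es" "f \<noteq> 0" "mdvd (lead_monom f) m"
    and m: "m \<in> monoms_deg s d" "lookup m (s - 1) < 2"
  shows "m \<in> init_monoms d TYPE('a)"
proof -
  have m_eq: "(m - lead_monom f) + lead_monom f = m"
    using f(3) by (metis add_diff_monom add.commute)
  let ?b = "Poly_Mapping.single (m - lead_monom f) (1::'a)"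
  have bf: "?b * f \<in> IXts2 n es"
    using f(1) m(1) keys_diff_monom_subset
    unfolding IXts2_eq monoms_deg_def by (intro ideal_gen_mult Sring_single) blast+
  have bf0: "?b * f \<noteq> 0" and lead_bf: "lead_monom (?b * f) = m"
    using lead_monom_monom_mult[of 1 f] f(2) m_eq by simp_all
  let ?h = "hom_comp d (?b * f)"
  have m_in_h: "m \<in> keys ?h"
    using lead_monom_in_keys[OF bf0] lead_bf m(1) by (simp add: keys_hom_comp monoms_deg_def)
  then have h0: "?h \<noteq> 0"
    by auto
  have "lead_monom ?h = m"
    using m_in_h grevlex_less_lead_monom[OF bf0] lead_bf by (auto simp: keys_hom_comp intro: lead_monom_eqI)
  then show ?thesis
    using lead_monom_vanishing_plus_ts_sq[OF hom_comp_IXts2[OF bf] h0] m(2) by simp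
qed

lemma std_monoms_eq:
  "std_monoms n es d TYPE('a::field) = {m \<in> std_monoms_X d TYPE('a). lookup m (s - 1) < 2}"
proof (intro set_eqI iffI)
  fix m
  assume std: "m \<in> std_monoms n es d TYPE('a)"
  then have m: "m \<in> monoms_deg s d"
    unfolding std_monoms_def monoms_deg_def by blast
  have nd: "\<not> mdvd (lead_monom f) m" if "f \<in> (IXts2 n es :: 'a mpoly set)" "f \<noteq> 0" for f
    using std that unfolding std_monoms_def by blast
  have "m \<notin> init_monoms d TYPE('a)"
    using nd vanishing_hom_subset_IXts2 mdvd_refl by (fastforce elim: init_monomsE)
  moreover have "\<not> 2 \<le> lookup m (s - 1)"
  proof
    assume "2 \<le> lookup m (s - 1)"
    then have m_eq: "(m - ts_sq_monom s) + ts_sq_monom s = m"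
      using add_diff_monom mdvd_ts_sq_monom_iff by (metis add.commute)
    have "keys (m - ts_sq_monom s) \<subseteq> {..<s}"
      using m keys_diff_monom_subset unfolding monoms_deg_def by blast
    then have "Poly_Mapping.single (m - ts_sq_monom s) (1::'a) * ts_sq s \<in> IXts2 n es"
      by (rule monom_mult_ts_sq_IXts2)
    then show False
      using nd[of "Poly_Mapping.single (m - ts_sq_monom s) 1 * ts_sq s"] mdvd_refl m_eq
      by (simp add: lead_monom_monom_mult)
  qed
  ultimately show "m \<in> {m \<in> std_monoms_X d TYPE('a). lookup m (s - 1) < 2}"
    using m unfolding std_monoms_X_def by simp
next
  fix m
  assume "m \<in> {m \<in> std_monoms_X d TYPE('a). lookup m (s - 1) < 2}"
  then have "m \<in> monoms_deg s d" "m \<notin> init_monoms d TYPE('a)" "lookup m (s - 1) < 2"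
    unfolding std_monoms_X_def by auto
  then show "m \<in> std_monoms n es d TYPE('a)"
    using init_monoms_if_mdvd_lead_monom_IXts2 unfolding std_monoms_def monoms_deg_def by blast
qed

section \<open>Multiplication by t_s^2\<close>

lemma ex_ts_sq_factor:
  fixes f :: "('a::field) mpoly"
  assumes "\<forall>x\<in>keys f. 2 \<le> lookup x (s - 1)"
  obtains g where "f = ts_sq s * g"
proof
  let ?T = "ts_sq_monom s"
  have "finite {k. lookup f (?T + k) \<noteq> 0}"
    by (rule finite_subset[of _ "(\<lambda>x. x - ?T) ` keys f"]) (auto simp: in_keys_iff intro!: image_eqI)
  then have lookup_g: "lookup (Abs_poly_mapping (\<lambda>k. lookup f (?T + k))) k = lookup f (?T + k)" for k
    by simp
  show "f = ts_sq s * Abs_poly_mapping (\<lambda>k. lookup f (?T + k))"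
  proof (rule poly_mapping_eqI)
    fix x
    show "lookup f x = lookup (ts_sq s * Abs_poly_mapping (\<lambda>k. lookup f (?T + k))) x"
    proof (cases "mdvd ?T x")
      case True
      then show ?thesis
        unfolding ts_sq_def by (simp add: lookup_monom_mult lookup_g add_diff_monom)
    next
      case False
      then have "x \<notin> keys f"
        using assms mdvd_ts_sq_monom_iff by blast
      then show ?thesis
        unfolding ts_sq_def using False by (simp add: lookup_monom_mult in_keys_iff)
    qed
  qed
qed

text \<open>Here t_s not vanishing on X is used: t_s^2 is a non-zero-divisor modulo I(X).\<close>
lemma vanishing_hom_ts_sq_factor:
  fixes f :: "('a::field) mpoly"
  assumes f: "f \<in> vanishing_hom (d + 2)" "2 \<le> lookup (lead_monom f) (s - 1)"
  obtains g where "g \<in> vanishing_hom d" "f = ts_sq s * g"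
proof -
  have fS: "f \<in> Shom s (d + 2)"
    using f(1) unfolding vanishing_hom_def by simp
  then have "\<forall>x\<in>keys f. 2 \<le> lookup x (s - 1)"
    using f(2) lookup_lead_monom_last_le[OF fS] order.trans by blast
  then obtain g where fg: "f = ts_sq s * g"
    by (rule ex_ts_sq_factor)
  have "keys (ts_sq s * g) = (\<lambda>k. ts_sq_monom s + k) ` keys g"
    unfolding ts_sq_def by (rule keys_monom_mult) simp
  then have "g \<in> Shom s d"
    using fS fg unfolding Shom_iff by (auto simp: keys_add_monom mdeg_add)
  moreover have "vanishes_on_X g"
    using f(1) fg unfolding vanishing_hom_def by (simp add: vanishes_on_X_ts_sq_mult_iff)
  ultimately show ?thesis
    using that fg unfolding vanishing_hom_def by blast
qed

lemma ts_sq_monom_add_init_monoms_iff: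
  "m + ts_sq_monom s \<in> init_monoms (d + 2) TYPE('a::field) \<longleftrightarrow> m \<in> init_monoms d TYPE('a)"
proof
  assume "m \<in> init_monoms d TYPE('a)"
  then obtain g :: "'a mpoly" where g: "g \<in> vanishing_hom d" "g \<noteq> 0" "lead_monom g = m"
    by (rule init_monomsE)
  have "ts_sq s * g \<in> vanishing_hom (d + 2)"
    using vanishing_hom_mult[OF ts_sq_Shom g(1)] edges_nonempty by (simp add: add.commute)
  moreover have "ts_sq s * g \<noteq> 0" "lead_monom (ts_sq s * g) = m + ts_sq_monom s"
    using lead_monom_ts_sq_mult[OF g(2)] g(2,3) by (simp_all add: add.commute)
  ultimately show "m + ts_sq_monom s \<in> init_monoms (d + 2) TYPE('a)"
    by (metis init_monomsI)
next
  assume "m + ts_sq_monom s \<in> init_monoms (d + 2) TYPE('a)"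
  then obtain f :: "'a mpoly" where f: "f \<in> vanishing_hom (d + 2)" "f \<noteq> 0" "lead_monom f = m + ts_sq_monom s"
    by (rule init_monomsE)
  moreover have "2 \<le> lookup (lead_monom f) (s - 1)"
    using f(3) by (simp add: lookup_add lookup_ts_sq_monom)
  ultimately obtain g where g: "g \<in> vanishing_hom d" "f = ts_sq s * g"
    using vanishing_hom_ts_sq_factor by blast
  then have "g \<noteq> 0"
    using f(2) by auto
  moreover have "lead_monom g = m"
    using lead_monom_ts_sq_mult[OF \<open>g \<noteq> 0\<close>] g(2) f(3) by (simp add: add.commute)
  ultimately show "m \<in> init_monoms d TYPE('a)"
    using init_monomsI[OF g(1)] by blast
qed

section \<open>Counting standard monomials\<close>

lemma bij_betw_add_ts_sq_monom:
  "bij_betw (\<lambda>m. m + ts_sq_monom s) (std_monoms_X d TYPE('a::field))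
     {m \<in> std_monoms_X (d + 2) TYPE('a). 2 \<le> lookup m (s - 1)}"
proof (rule bij_betw_imageI)
  show "inj_on (\<lambda>m. m + ts_sq_monom s) (std_monoms_X d TYPE('a))"
    by (rule inj_onI) simp
next
  show "(\<lambda>m. m + ts_sq_monom s) ` std_monoms_X d TYPE('a)
      = {m \<in> std_monoms_X (d + 2) TYPE('a). 2 \<le> lookup m (s - 1)}"
  proof (intro set_eqI iffI)
    fix x assume "x \<in> (\<lambda>m. m + ts_sq_monom s) ` std_monoms_X d TYPE('a)"
    then obtain m where m: "m \<in> monoms_deg s d" "m \<notin> init_monoms d TYPE('a)" "x = m + ts_sq_monom s"
      unfolding std_monoms_X_def by auto
    then have "x \<in> monoms_deg s (d + 2)"
      using edges_nonempty by (auto simp: monoms_deg_def keys_add_monom mdeg_add keys_ts_sq_monom)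
    then show "x \<in> {m \<in> std_monoms_X (d + 2) TYPE('a). 2 \<le> lookup m (s - 1)}"
      using ts_sq_monom_add_init_monoms_iff[of m d, where 'a = 'a] m
      by (simp add: std_monoms_X_def lookup_add lookup_ts_sq_monom)
  next
    fix x assume x: "x \<in> {m \<in> std_monoms_X (d + 2) TYPE('a). 2 \<le> lookup m (s - 1)}"
    let ?m = "x - ts_sq_monom s"
    have "mdvd (ts_sq_monom s) x"
      using x mdvd_ts_sq_monom_iff by blast
    then have x_eq: "?m + ts_sq_monom s = x"
      by (subst add.commute) (rule add_diff_monom)
    then have "mdeg x = mdeg ?m + 2"
      using mdeg_add[of ?m "ts_sq_monom s"] by simp
    then have "?m \<in> monoms_deg s d"
      using x keys_diff_monom_subset[of x "ts_sq_monom s"] unfolding std_monoms_X_def monoms_deg_def by auto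
    then have "?m \<in> std_monoms_X d TYPE('a)"
      using ts_sq_monom_add_init_monoms_iff[of ?m d, where 'a = 'a] x x_eq unfolding std_monoms_X_def by simp
    then show "x \<in> (\<lambda>m. m + ts_sq_monom s) ` std_monoms_X d TYPE('a)"
      using x_eq by (intro image_eqI[of _ _ ?m]) auto
  qed
qed

lemma card_std_monoms_X_add_two:
  "card (std_monoms_X (d + 2) TYPE('a::field)) = beta n es TYPE('a) (d + 2) + card (std_monoms_X d TYPE('a))"
proof -
  let ?A = "std_monoms_X (d + 2) TYPE('a)"
  have split: "?A = {m \<in> ?A. lookup m (s - 1) < 2} \<union> {m \<in> ?A. 2 \<le> lookup m (s - 1)}"
    by auto
  have "card ?A = card {m \<in> ?A. lookup m (s - 1) < 2} + card {m \<in> ?A. 2 \<le> lookup m (s - 1)}"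
    by (subst split, rule card_Un_disjoint) (auto simp: finite_std_monoms_X)
  moreover have "card {m \<in> ?A. lookup m (s - 1) < 2} = beta n es TYPE('a) (d + 2)"
    unfolding beta_def std_monoms_eq ..
  moreover have "card (std_monoms_X d TYPE('a)) = card {m \<in> ?A. 2 \<le> lookup m (s - 1)}"
    by (rule bij_betw_same_card[OF bij_betw_add_ts_sq_monom])
  ultimately show ?thesis
    by simp
qed

lemma card_std_monoms_X_eq_sum:
  "card (std_monoms_X d TYPE('a::field)) = (\<Sum>i\<le>d div 2. beta n es TYPE('a) (d - 2 * i))"
proof (induction d rule: nat_less_induct)
  case (1 d)
  show ?case
  proof (cases "d < 2")
    case True
    then have "lookup m (s - 1) < 2" if "m \<in> std_monoms_X d TYPE('a)" for m
      using that lookup_le_mdeg[of m "s - 1"] unfolding std_monoms_X_def monoms_deg_def by auto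
    then have "card (std_monoms_X d TYPE('a)) = beta n es TYPE('a) d"
      unfolding beta_def std_monoms_eq by (metis (mono_tags, lifting) Collect_mem_eq Collect_cong)
    then show ?thesis
      using True by simp
  next
    case False
    then obtain e where e: "d = e + 2"
      by (metis add.commute le_Suc_ex not_less)
    have "(\<Sum>i\<le>d div 2. beta n es TYPE('a) (d - 2 * i))
        = beta n es TYPE('a) d + (\<Sum>i\<le>e div 2. beta n es TYPE('a) (e - 2 * i))"
      unfolding e by (simp add: sum.atMost_Suc_shift del: sum.atMost_Suc)
    then show ?thesis
      using card_std_monoms_X_add_two[of e, where 'a = 'a] 1 e by simp
  qed
qed

end

theorem proposition2p2:
  fixes n :: nat and es :: "nat set list" and d :: nat
  assumes "card (UNIV :: 'a set) = 3"
    and "simple_graph n es"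
    and "length es \<ge> 1"
  shows "fdim (param_code n es d :: ((nat \<Rightarrow> 'a::{field,finite}) set \<Rightarrow> 'a) set)
         = (\<Sum>i\<le>d div 2. beta n es TYPE('a) (d - 2 * i))"
proof -
  interpret graph_torus n es
    using assms(2,3) by unfold_locales
  show ?thesis
    using fdim_param_code[of d, where 'a = 'a] card_std_monoms_X_eq_sum[of d, where 'a = 'a] by simp
qed

end
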